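(* Let $A,B\subset\mathbb{R}^n$ be set-germs at $0$ with $0\in\overline{A}\cap\overline{B}$ and let $h:(\mathbb{R}^n,0)\to(\mathbb{R}^n,0)$ be a bi-Lipschitz homeomorphism (germ). If $A$ and $B$ are $ST$-equivalent, then $h(A)$ and $h(B)$ are $ST$-equivalent.
   Context: A bi-Lipschitz homeomorphism germ is a homeomorphism between neighbourhoods of $0$ fixing $0$ with $K_1|x-y|\le|h(x)-h(y)|\le K_2|x-y|$ for some $0<K_1\le K_2$ near $0$. Sea-tangle neighbourhood: $ST_d(A;C)=\{x\in\mathbb{R}^n : \mathrm{dist}(x,A)\le C|x|^d\}$ for $d,C>0$. $A$ and $B$ are $ST$-equivalent if there are $d_1,d_2>1$ and $C_1,C_2>0$ with $B\subset ST_{d_1}(A;C_1)$ and $A\subset ST_{d_2}(B;C_2)$ as germs at $0$ (after intersecting with some neighbourhood of $0$). *)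

theory Defs
  imports "HOL-Analysis.Analysis"
begin

text \<open>Sea-tangle neighbourhood ST_d(A;C) = {x. dist(x,A) \<le> C |x|^d}.
  The set A is a nonempty representative near 0 in all uses (0 is in its closure).\<close>
definition ST :: "real \<Rightarrow> 'a::euclidean_space set \<Rightarrow> real \<Rightarrow> 'a set" where
  "ST d A C = {x. infdist x A \<le> C * norm x powr d}"

definition ST_equivalent :: "'a::euclidean_space set \<Rightarrow> 'a set \<Rightarrow> bool" where
  "ST_equivalent A B \<longleftrightarrow>
     (\<exists>d1 d2 C1 C2 r. d1 > 1 \<and> d2 > 1 \<and> C1 > 0 \<and> C2 > 0 \<and> r > 0 \<and>
        B \<inter> ball 0 r \<subseteq> ST d1 A C1 \<and> A \<inter> ball 0 r \<subseteq> ST d2 B C2)"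

definition bilipschitz_homeo_germ :: "('a::euclidean_space \<Rightarrow> 'a) \<Rightarrow> 'a set \<Rightarrow> bool" where
  "bilipschitz_homeo_germ h U \<longleftrightarrow>
     open U \<and> 0 \<in> U \<and> h 0 = 0 \<and> open (h ` U) \<and>
     (\<exists>g. homeomorphism U (h ` U) h g) \<and>
     (\<exists>K1 K2. 0 < K1 \<and> K1 \<le> K2 \<and>
        (\<forall>x\<in>U. \<forall>y\<in>U. K1 * dist x y \<le> dist (h x) (h y) \<and> dist (h x) (h y) \<le> K2 * dist x y))"

end

theory Submission
  imports Defs
begin

text \<open>Since \<open>0\<close> lies in the closure of \<open>A\<close>, a point \<open>x\<close> near \<open>0\<close> has \<open>dist(x,A) \<le> |x|\<close>, so its
  near-nearest points of \<open>A\<close> stay near \<open>0\<close>, inside the domain of \<open>h\<close>. There the upper Lipschitz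
  bound gives \<open>dist(h x, h A) \<le> K\<^sub>2 dist(x,A) \<le> K\<^sub>2 C |x|\<^sup>d\<close>, and the lower bound
  \<open>K\<^sub>1 |x| \<le> |h x|\<close> turns this into \<open>(K\<^sub>2 C / K\<^sub>1\<^sup>d) |h x|\<^sup>d\<close>. The exponents are unchanged;
  only the constants and radii change.\<close>

lemma infdist_less_iff:
  fixes x :: "'a::metric_space"
  assumes "A \<noteq> {}"
  shows "infdist x A < m \<longleftrightarrow> (\<exists>a\<in>A. dist x a < m)"
proof -
  have "bdd_below ((\<lambda>a. dist x a) ` A)"
    by (rule bdd_belowI[of _ 0]) auto
  then show ?thesis
    using cINF_less_iff[OF assms, of "\<lambda>a. dist x a" m] by (simp add: infdist_notempty[OF assms])
qed

lemma infdist_le_norm_if_zero_in_closure: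
  fixes x :: "'a::real_normed_vector"
  assumes "0 \<in> closure A"
  shows "infdist x A \<le> norm x"
proof -
  have "A \<noteq> {}"
    using assms by auto
  then have "infdist 0 A = 0"
    using assms by (simp add: in_closure_iff_infdist_zero)
  then show ?thesis
    using infdist_triangle[of x A 0] by simp
qed

lemma infdist_image_le_Lipschitz:
  fixes h :: "'a::metric_space \<Rightarrow> 'b::metric_space"
  assumes "A \<noteq> {}" and "ball x r \<subseteq> U" and "infdist x A < r" and "x \<in> U"
    and "K \<ge> 0" and Lip: "\<forall>y\<in>U. \<forall>z\<in>U. dist (h y) (h z) \<le> K * dist y z"
  shows "infdist (h x) (h ` (A \<inter> U)) \<le> K * infdist x A"
proof (rule field_le_epsilon)
  fix e :: real assume "e > 0"
  then have "infdist x A < min r (infdist x A + e / (K + 1))"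
    using assms(3,5) by simp
  then obtain a where "a \<in> A" "dist x a < min r (infdist x A + e / (K + 1))"
    using infdist_less_iff[OF assms(1)] by blast
  then have "a \<in> U" and a: "dist x a < infdist x A + e / (K + 1)"
    using assms(2) by auto
  have "dist (h x) (h a) \<le> K * dist x a"
    using Lip \<open>x \<in> U\<close> \<open>a \<in> U\<close> by blast
  also have "\<dots> \<le> K * infdist x A + K * (e / (K + 1))"
    using mult_left_mono[OF less_imp_le[OF a] \<open>K \<ge> 0\<close>] by (simp add: distrib_left)
  also have "\<dots> \<le> K * infdist x A + e"
    using \<open>e > 0\<close> \<open>K \<ge> 0\<close> by (simp add: field_simps)
  finally have "dist (h x) (h a) \<le> K * infdist x A + e" .
  then show "infdist (h x) (h ` (A \<inter> U)) \<le> K * infdist x A + e"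
    using \<open>a \<in> A\<close> \<open>a \<in> U\<close> by (blast intro: infdist_le2)
qed

lemma ST_image_Lipschitz:
  fixes h :: "'a::euclidean_space \<Rightarrow> 'a"
  assumes "0 \<in> closure A" and "\<rho> > 0" and "ball 0 \<rho> \<subseteq> U"
    and "K1 > 0" and "K2 \<ge> 0" and lower: "\<forall>x\<in>U. K1 * norm x \<le> norm (h x)"
    and upper: "\<forall>x\<in>U. \<forall>y\<in>U. dist (h x) (h y) \<le> K2 * dist x y"
    and "d \<ge> 0" and "C \<ge> 0" and inc: "B \<inter> ball 0 r \<subseteq> ST d A C"
  shows "h ` (B \<inter> U) \<inter> ball 0 (K1 * min r (\<rho> / 2)) \<subseteq> ST d (h ` (A \<inter> U)) (K2 * C / K1 powr d)"
proof
  fix z assume "z \<in> h ` (B \<inter> U) \<inter> ball 0 (K1 * min r (\<rho> / 2))"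
  then obtain x where "x \<in> B" "x \<in> U" and z: "z = h x" "norm z < K1 * min r (\<rho> / 2)"
    by auto
  have x_le: "norm x \<le> norm z / K1"
    using lower \<open>x \<in> U\<close> \<open>K1 > 0\<close> z(1) by (simp add: field_simps)
  also have "\<dots> < min r (\<rho> / 2)"
    using z(2) \<open>K1 > 0\<close> by (metis pos_divide_less_eq mult.commute)
  finally have "norm x < r" "norm x < \<rho> / 2"
    by auto
  then have "infdist x A \<le> C * norm x powr d"
    using inc \<open>x \<in> B\<close> by (auto simp: ST_def)
  have "infdist x A < \<rho> / 2"
    using infdist_le_norm_if_zero_in_closure[OF assms(1)] \<open>norm x < \<rho> / 2\<close> by (rule le_less_trans)
  have "ball x (\<rho> / 2) \<subseteq> ball 0 \<rho>"
    using \<open>norm x < \<rho> / 2\<close> by (subst ball_subset_ball_iff) simp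
  then have "ball x (\<rho> / 2) \<subseteq> U"
    using assms(3) by (rule order_trans)
  moreover have "A \<noteq> {}"
    using assms(1) by auto
  ultimately have "infdist z (h ` (A \<inter> U)) \<le> K2 * infdist x A"
    unfolding z(1) using \<open>infdist x A < \<rho> / 2\<close> \<open>x \<in> U\<close> \<open>K2 \<ge> 0\<close> upper
    by (intro infdist_image_le_Lipschitz)
  also have "\<dots> \<le> K2 * (C * norm x powr d)"
    using \<open>infdist x A \<le> C * norm x powr d\<close> \<open>K2 \<ge> 0\<close> by (rule mult_left_mono)
  also have "\<dots> \<le> K2 * (C * (norm z powr d / K1 powr d))"
    using powr_mono2[OF \<open>d \<ge> 0\<close> norm_ge_zero x_le] \<open>K1 > 0\<close> \<open>C \<ge> 0\<close> \<open>K2 \<ge> 0\<close>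
    by (intro mult_left_mono) (simp_all add: powr_divide)
  also have "\<dots> = K2 * C / K1 powr d * norm z powr d"
    by simp
  finally show "z \<in> ST d (h ` (A \<inter> U)) (K2 * C / K1 powr d)"
    unfolding ST_def mem_Collect_eq .
qed

lemma ST_image_bilipschitz_homeo_germ:
  assumes "bilipschitz_homeo_germ h U" and "0 \<in> closure A"
    and "d \<ge> 0" and "C > 0" and "r > 0" and "B \<inter> ball 0 r \<subseteq> ST d A C"
  shows "\<exists>C' r'. C' > 0 \<and> r' > 0 \<and> h ` (B \<inter> U) \<inter> ball 0 r' \<subseteq> ST d (h ` (A \<inter> U)) C'"
proof -
  obtain K1 K2 where "0 < K1" "K1 \<le> K2"
    and K: "\<forall>x\<in>U. \<forall>y\<in>U. K1 * dist x y \<le> dist (h x) (h y) \<and> dist (h x) (h y) \<le> K2 * dist x y"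
    using assms(1) unfolding bilipschitz_homeo_germ_def by blast
  obtain \<rho> where "\<rho> > 0" "ball 0 \<rho> \<subseteq> U"
    using assms(1) unfolding bilipschitz_homeo_germ_def by (meson open_contains_ball)
  have "0 \<in> U" "h 0 = 0"
    using assms(1) unfolding bilipschitz_homeo_germ_def by auto
  then have lower: "\<forall>x\<in>U. K1 * norm x \<le> norm (h x)"
    using K by (metis dist_0_norm dist_commute)
  have upper: "\<forall>x\<in>U. \<forall>y\<in>U. dist (h x) (h y) \<le> K2 * dist x y"
    using K by blast
  have "h ` (B \<inter> U) \<inter> ball 0 (K1 * min r (\<rho> / 2)) \<subseteq> ST d (h ` (A \<inter> U)) (K2 * C / K1 powr d)"
    by (rule ST_image_Lipschitz[OF assms(2) \<open>\<rho> > 0\<close> \<open>ball 0 \<rho> \<subseteq> U\<close> \<open>0 < K1\<close> _ lower upper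
          assms(3) _ assms(6)])
      (use \<open>0 < K1\<close> \<open>K1 \<le> K2\<close> assms(4) in auto)
  moreover have "K2 * C / K1 powr d > 0" "K1 * min r (\<rho> / 2) > 0"
    using \<open>0 < K1\<close> \<open>K1 \<le> K2\<close> \<open>\<rho> > 0\<close> assms(4,5) by simp_all
  ultimately show ?thesis
    by blast
qed

lemma ST_equivalentI:
  assumes "d1 > 1" "d2 > 1" "C1 > 0" "C2 > 0" "r1 > 0" "r2 > 0"
    and "B \<inter> ball 0 r1 \<subseteq> ST d1 A C1" "A \<inter> ball 0 r2 \<subseteq> ST d2 B C2"
  shows "ST_equivalent A B"
  unfolding ST_equivalent_def
proof (intro exI conjI)
  show "B \<inter> ball 0 (min r1 r2) \<subseteq> ST d1 A C1" "A \<inter> ball 0 (min r1 r2) \<subseteq> ST d2 B C2"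
    using assms(7,8) by auto
qed (use assms in auto)

theorem proposition4p5:
  fixes A B U :: "'a::euclidean_space set" and h :: "'a \<Rightarrow> 'a"
  assumes "0 \<in> closure A" and "0 \<in> closure B"
    and "bilipschitz_homeo_germ h U"
    and "ST_equivalent A B"
  shows "ST_equivalent (h ` (A \<inter> U)) (h ` (B \<inter> U))"
proof -
  obtain d1 d2 C1 C2 r where "d1 > 1" "d2 > 1" "C1 > 0" "C2 > 0" "r > 0"
    and BA: "B \<inter> ball 0 r \<subseteq> ST d1 A C1" and AB: "A \<inter> ball 0 r \<subseteq> ST d2 B C2"
    using assms(4) unfolding ST_equivalent_def by blast
  obtain C1' r1 where "C1' > 0" "r1 > 0" "h ` (B \<inter> U) \<inter> ball 0 r1 \<subseteq> ST d1 (h ` (A \<inter> U)) C1'"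
    using ST_image_bilipschitz_homeo_germ[OF assms(3,1) _ \<open>C1 > 0\<close> \<open>r > 0\<close> BA] \<open>d1 > 1\<close> by auto
  moreover obtain C2' r2 where "C2' > 0" "r2 > 0" "h ` (A \<inter> U) \<inter> ball 0 r2 \<subseteq> ST d2 (h ` (B \<inter> U)) C2'"
    using ST_image_bilipschitz_homeo_germ[OF assms(3,2) _ \<open>C2 > 0\<close> \<open>r > 0\<close> AB] \<open>d2 > 1\<close> by auto
  ultimately show ?thesis
    using \<open>d1 > 1\<close> \<open>d2 > 1\<close> by (intro ST_equivalentI)
qed

end
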